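(* Let $w\in\mathcal{W}^o_n$ and let $(O,E)\to(O',E')$ be one application of the step $(\psi)$ during the computation of $\Psi(w)$, with $O=o_1|\cdots|o_m$ and (when $o_m$ is splittable) $o_m=rs$ its standard factorization, as in the definition of $(\psi)$. Let $O'=o'_1|\cdots|o'_h$ be the Lyndon factorization of $O'$, with the convention $o'_i=\infty$ for $i\le0$. Then: (i) The Lyndon factors of $O'$ are odd and pairwise distinct, and the Lyndon factorization of $O'$ is $o_1|\cdots|o_{m-1}|r$ after a step of type (S), $o_1|\cdots|o_{m-1}|s$ after a step of type (P), and $o_1|\cdots|o_{m-2}$ after a step of type (F). (ii) $E'<o'_{h-1}$. (iii) After a step of type (F), $E'<o'_h$. (iv) After a step of type (P), $E'<o'_h$ and $E<o'_h$. (v) After a step of type (S), $s$ is the leftmost Lyndon factor of $E'$, and $o'_h<s\le E'$. (vi) All the Lyndon factors of $E'$ are even. Moreover, writing $E'=\ell E$ (so $\ell=s$, $r$, or $o_mo_{m-1}$ in cases (S), (P), (F) respectively), the word $\ell$ is contained in the leftmost Lyndon factor of $E'$ (i.e., $|\ell|$ is at most the length of that factor).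
   Context: Fix a finite totally ordered alphabet $A$. Words are finite sequences over $A$; $-$ is the empty word; $\mathcal{W}_n$ is the set of words of length $n$. $<$ is lexicographic order (a proper prefix is smaller than the word); $\infty$ is a formal symbol with $w<\infty$ for all words $w$. A Lyndon word is a nonempty word strictly smaller than each of its proper nonempty suffixes. Every word has a unique Lyndon factorization $w=\ell_1\cdots\ell_m$ into Lyndon words with $\ell_1\ge\dots\ge\ell_m$, written $\ell_1|\cdots|\ell_m$; the $\ell_i$ are the Lyndon factors. Odd/even refer to lengths. For a Lyndon word $\ell$ with $|\ell|\ge2$, its standard factorization is $\ell=rs$ with $s$ the longest proper suffix of $\ell$ that is Lyndon (equivalently the smallest proper nonempty suffix). $\mathcal{W}^o_n$: words of length $n$ whose Lyndon factors are all odd and pairwise distinct. Computation of $\Psi(w)$ for $w\in\mathcal{W}^o_n$: start with $(O,E)=(w,-)$. While $|O|\ge2$, apply step $(\psi)$: let $O=o_1|\cdots|o_m$ be its Lyndon factorization (with $o_{m-1}=\infty$ if $m=1$). Call $o_m$ splittable if $|o_m|\ge2$ and its standard factorization $o_m=rs$ satisfies $s<o_{m-1}$. Update $(O,E)$ to: (S) $(o_1\cdots o_{m-1}r,\ sE)$ if $o_m$ is splittable and $r$ is odd; (P) $(o_1\cdots o_{m-1}s,\ rE)$ if $o_m$ is splittable and $r$ is even; (F) $(o_1\cdots o_{m-2},\ o_mo_{m-1}E)$ if $o_m$ is not splittable. (If $|O|=1$ is reached, that letter is inserted into $E$ as a new Lyndon factor keeping factors weakly decreasing; this final move is not a step $(\psi)$.)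 When $O$ is empty, $\Psi(w)=E$. *)

theory Defs
  imports Main
begin

text \<open>The order on words is lexicographic order with proper prefixes smaller
  (library lexordp / lexordp_eq).  The formal symbol infinity is modelled
  by None in the type 'a list option (Some w is the word w).\<close>

definition ext_less :: "'a::linorder list option \<Rightarrow> 'a list option \<Rightarrow> bool" where
  "ext_less x y = (case y of
      None \<Rightarrow> x \<noteq> None
    | Some b \<Rightarrow> (case x of None \<Rightarrow> False | Some a \<Rightarrow> ord_class.lexordp a b))"

definition lyndon :: "'a::linorder list \<Rightarrow> bool" where
  "lyndon w \<longleftrightarrow> w \<noteq> [] \<and> (\<forall>k. 0 < k \<and> k < length w \<longrightarrow> ord_class.lexordp w (drop k w))"

definition is_lfact :: "'a::linorder list \<Rightarrow> 'a list list \<Rightarrow> bool" where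
  "is_lfact w fs \<longleftrightarrow> concat fs = w \<and> (\<forall>f\<in>set fs. lyndon f)
      \<and> sorted_wrt (\<lambda>a b. ord_class.lexordp_eq b a) fs"

definition lfact :: "'a::linorder list \<Rightarrow> 'a list list" where
  "lfact w = (THE fs. is_lfact w fs)"

definition std_k :: "'a::linorder list \<Rightarrow> nat" where
  "std_k l = (LEAST k. 0 < k \<and> k < length l \<and> lyndon (drop k l))"

definition std_r :: "'a::linorder list \<Rightarrow> 'a list" where
  "std_r l = take (std_k l) l"

definition std_s :: "'a::linorder list \<Rightarrow> 'a list" where
  "std_s l = drop (std_k l) l"

definition in_Wo :: "'a::linorder list \<Rightarrow> bool" where
  "in_Wo w \<longleftrightarrow> (\<forall>f\<in>set (lfact w). odd (length f)) \<and> distinct (lfact w)"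

datatype steptype = StepS | StepP | StepF

text \<open>o_{m-1} with the convention o_{m-1} = infinity if m = 1.\<close>
definition prev_fact :: "'a list list \<Rightarrow> 'a list option" where
  "prev_fact os = (if length os \<ge> 2 then Some (os ! (length os - 2)) else None)"

definition splittable :: "'a::linorder list list \<Rightarrow> bool" where
  "splittable os \<longleftrightarrow> length (last os) \<ge> 2 \<and> ext_less (Some (std_s (last os))) (prev_fact os)"

definition psi_step :: "'a::linorder list \<Rightarrow> 'a list \<Rightarrow> steptype \<Rightarrow> 'a list \<Rightarrow> 'a list \<Rightarrow> bool" where
  "psi_step Ob Eb t Ob' Eb' \<longleftrightarrow> length Ob \<ge> 2 \<and>
    (let os = lfact Ob; m = length os; om = last os; r = std_r om; s = std_s om in
      (t = StepS \<and> splittable os \<and> odd (length r) \<and> Ob' = concat (butlast os) @ r \<and> Eb' = s @ Eb)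
    \<or> (t = StepP \<and> splittable os \<and> even (length r) \<and> Ob' = concat (butlast os) @ s \<and> Eb' = r @ Eb)
    \<or> (t = StepF \<and> \<not> splittable os \<and> Ob' = concat (take (m - 2) os)
         \<and> Eb' = om @ os ! (m - 2) @ Eb))"

inductive psi_reach :: "'a::linorder list \<Rightarrow> 'a list \<Rightarrow> 'a list \<Rightarrow> bool" for w where
  init: "psi_reach w w []"
| step: "psi_reach w Ob Eb \<Longrightarrow> psi_step Ob Eb t Ob' Eb' \<Longrightarrow> psi_reach w Ob' Eb'"

end

(*
  The statements are proved together with an invariant of the states (O, E), O = o_1|...|o_m,
  reached during the computation of Psi(w): the Lyndon factors of O are odd and pairwise
  distinct, those of E are even, E < o_i for i < m, and every Lyndon factor of E is at most
  every proper suffix of o_m.  The last clause is what a step hands on to the next one: after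
  (S) the leading factor of E' is s, the smallest proper suffix of o_m = r s, so it is at most
  every proper suffix of the new last factor r; after (P) and (F) all of E' is smaller than the
  new last factor.  In turn it makes s dominate the Lyndon factors of E, so that s becomes the
  leftmost factor of s E in step (S), while in step (P) parity (factors of E even, s odd) makes
  them strictly smaller than s, whence E < s.  The factorization of O' follows from
  r < o_m < s < o_{m-1} <= o_i, and prepending the even Lyndon word l to E only merges l with
  some leading factors of E, so all factors stay even.
*)
theory Submission
  imports Defs "HOL-Library.List_Lexorder"
begin

lemma lexordp_iff_less [simp]: "ord_class.lexordp (xs::'a::linorder list) ys \<longleftrightarrow> xs < ys"
  by (simp add: lexordp_conv_lexord list_less_def)

lemma lexordp_eq_iff_le [simp]: "ord_class.lexordp_eq (xs::'a::linorder list) ys \<longleftrightarrow> xs \<le> ys"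
  by (auto simp: lexordp_eq_conv_lexord list_le_def)

lemma append_less_append_iff [simp]: "(xs::'a::linorder list) @ us < xs @ vs \<longleftrightarrow> us < vs"
  by (induction xs) auto

lemma less_append: "(ys::'a::linorder list) \<noteq> [] \<Longrightarrow> xs < xs @ ys"
  by (induction xs) (auto simp: neq_Nil_conv)

lemma le_append: "(xs::'a::linorder list) \<le> xs @ ys"
  using less_append[of ys xs] by (cases "ys = []") auto

lemma less_imp_append_less_or_prefix:
  assumes "(xs::'a::linorder list) < ys"
  shows "xs @ u < ys @ v \<or> (\<exists>z. z \<noteq> [] \<and> ys = xs @ z)"
  using assms[folded lexordp_iff_less] unfolding lexordp_iff by auto

lemma append_less_append_if_length_le:
  assumes "(xs::'a::linorder list) < ys" "length ys \<le> length xs"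
  shows "xs @ u < ys @ v"
  using less_imp_append_less_or_prefix[OF assms(1), of u v] assms(2) by auto

section \<open>Lyndon words\<close>

lemma lyndonD: "lyndon w \<Longrightarrow> 0 < k \<Longrightarrow> k < length w \<Longrightarrow> w < drop k w"
  by (simp add: lyndon_def)

lemma lyndon_not_Nil: "lyndon w \<Longrightarrow> w \<noteq> []"
  by (simp add: lyndon_def)

lemma lyndon_singleton: "lyndon [a]"
  by (auto simp: lyndon_def)

lemma lyndon_le_drop: "lyndon w \<Longrightarrow> k < length w \<Longrightarrow> w \<le> drop k w"
  using lyndonD[of w k] by (cases "k = 0") (auto intro: less_imp_le)

lemma lyndon_append_less:
  fixes u v w :: "'a::linorder list"
  assumes "lyndon w" "u \<noteq> []" "u < w" "v \<le> w"
  shows "u @ v < w"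
  using less_imp_append_less_or_prefix[OF \<open>u < w\<close>, of v "[]"]
proof
  assume "\<exists>z. z \<noteq> [] \<and> w = u @ z"
  then obtain z where "z \<noteq> []" "w = u @ z" by blast
  moreover have "w < drop (length u) w"
    using assms(1,2) \<open>z \<noteq> []\<close> \<open>w = u @ z\<close> by (intro lyndonD) auto
  ultimately show "u @ v < w" using \<open>v \<le> w\<close> by simp
qed simp

lemma lyndon_append:
  fixes u v :: "'a::linorder list"
  assumes u: "lyndon u" and v: "lyndon v" and "u < v"
  shows "lyndon (u @ v)"
proof -
  have "u \<noteq> []" using u by (rule lyndon_not_Nil)
  then have uv_v: "u @ v < v" using lyndon_append_less[OF v _ \<open>u < v\<close>] by simp
  have "u @ v < drop k (u @ v)" if "0 < k" "k < length (u @ v)" for k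
  proof (cases k "length u" rule: linorder_cases)
    case less
    then have "u < drop k u" using u \<open>0 < k\<close> by (intro lyndonD) auto
    then have "u @ v < drop k u @ v" by (rule append_less_append_if_length_le) simp
    then show ?thesis using less by simp
  next
    case greater
    then have "v < drop (k - length u) v" using v that by (intro lyndonD) auto
    then show ?thesis using uv_v greater by simp
  qed (use uv_v in simp)
  then show ?thesis using \<open>u \<noteq> []\<close> by (simp add: lyndon_def)
qed

lemma concat_less_if_less_suffixes:
  fixes y :: "'a::linorder list"
  assumes "y \<noteq> []" "\<forall>f\<in>set fs. \<forall>j<length y. f < drop j y"
  shows "concat fs < y"
  using assms
proof (induction fs arbitrary: y)
  case Nil
  then show ?case by (cases y) auto
next
  case (Cons f fs)
  then have "f < y" by (metis drop0 length_greater_0_conv list.set_intros(1))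
  from less_imp_append_less_or_prefix[OF this, of "concat fs" "[]"] show ?case
  proof
    assume "\<exists>z. z \<noteq> [] \<and> y = f @ z"
    then obtain z where z: "z \<noteq> []" "y = f @ z" by blast
    have "\<forall>g\<in>set fs. \<forall>j<length z. g < drop j z"
    proof (intro ballI allI impI)
      fix g j assume "g \<in> set fs" "j < length z"
      then have "\<forall>i<length y. g < drop i y" and "length f + j < length y"
        using Cons.prems(2) z by auto
      then have "g < drop (length f + j) y" by blast
      then show "g < drop j z" using z by simp
    qed
    then have "concat fs < z" using Cons.IH z(1) by blast
    then show ?thesis using z by simp
  qed simp
qed

lemma lyndon_le_if_le_append:
  fixes s v :: "'a::linorder list"
  assumes "lyndon v" "s \<noteq> []" "v \<le> s @ v"
  shows "v \<le> s"
proof (rule ccontr)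
  assume "\<not> v \<le> s"
  then have "s @ v < v" using assms(1,2) by (intro lyndon_append_less) auto
  then show False using assms(3) by simp
qed

section \<open>Lyndon factorization\<close>

text \<open>The first factor is the longest Lyndon prefix: this gives uniqueness.\<close>
lemma is_lfact_Cons_length_le:
  fixes w :: "'a::linorder list"
  assumes fs: "is_lfact w (f # fs)" and p: "lyndon p" and w: "w = p @ q"
  shows "length p \<le> length f"
proof (rule ccontr)
  assume "\<not> length p \<le> length f"
  then obtain p' where p': "p = f @ p'" "p' \<noteq> []"
    using fs w by (auto simp: is_lfact_def append_eq_append_conv2)
  have "f \<noteq> []" using fs by (auto simp: is_lfact_def dest: lyndon_not_Nil)
  have "concat fs < p'"
  proof (rule concat_less_if_less_suffixes[OF \<open>p' \<noteq> []\<close>], intro ballI allI impI)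
    fix g j assume "g \<in> set fs" "j < length p'"
    then have "g \<le> f" using fs by (simp add: is_lfact_def)
    also have "f \<le> p" using p' le_append by blast
    also have "p < drop (length f + j) p" using p \<open>f \<noteq> []\<close> \<open>j < length p'\<close> p' by (intro lyndonD) auto
    finally show "g < drop j p'" using p' by simp
  qed
  moreover have "concat fs = p' @ q" using fs w p' by (simp add: is_lfact_def)
  ultimately show False using le_append[of p' q] by simp
qed

lemma is_lfact_unique:
  fixes w :: "'a::linorder list"
  assumes "is_lfact w fs" "is_lfact w gs"
  shows "fs = gs"
  using assms
proof (induction fs arbitrary: w gs)
  case Nil
  then show ?case by (cases gs) (auto simp: is_lfact_def dest: lyndon_not_Nil)
next
  case (Cons f fs)
  then obtain g gs' where gs: "gs = g # gs'"
    by (cases gs) (auto simp: is_lfact_def dest: lyndon_not_Nil)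
  have "lyndon f" "lyndon g" "w = f @ concat fs" "w = g @ concat gs'"
    using Cons.prems gs by (auto simp: is_lfact_def)
  with Cons.prems gs have "length f = length g"
    by (metis is_lfact_Cons_length_le le_antisym)
  with \<open>w = f @ concat fs\<close> \<open>w = g @ concat gs'\<close> have "f = g" "concat fs = concat gs'"
    by auto
  moreover have "fs = gs'"
    using Cons.prems gs \<open>concat fs = concat gs'\<close> by (intro Cons.IH[of "concat fs"]) (auto simp: is_lfact_def)
  ultimately show ?case using gs by simp
qed

lemma is_lfact_append_lyndon:
  fixes l E :: "'a::linorder list"
  assumes "lyndon l" "is_lfact E gs"
  shows "\<exists>j. is_lfact (l @ E) ((l @ concat (take j gs)) # drop j gs)"
  using assms
proof (induction gs arbitrary: l E)
  case Nil
  then show ?case by (auto simp: is_lfact_def)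
next
  case (Cons g gs)
  show ?case
  proof (cases "g \<le> l")
    case True
    then have "is_lfact (l @ E) (l # g # gs)" using Cons.prems by (auto simp: is_lfact_def)
    then show ?thesis by (intro exI[of _ 0]) simp
  next
    case False
    then have "lyndon (l @ g)" using Cons.prems by (intro lyndon_append) (auto simp: is_lfact_def)
    from Cons.IH[OF this, of "concat gs"] Cons.prems obtain j where
      "is_lfact ((l @ g) @ concat gs) (((l @ g) @ concat (take j gs)) # drop j gs)"
      by (auto simp: is_lfact_def)
    then have "is_lfact (l @ E) ((l @ concat (take (Suc j) (g # gs))) # drop (Suc j) (g # gs))"
      using Cons.prems by (simp add: is_lfact_def)
    then show ?thesis by blast
  qed
qed

lemma is_lfact_exists: "\<exists>fs. is_lfact (w::'a::linorder list) fs"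
proof (induction w)
  case Nil
  show ?case by (intro exI[of _ "[]"]) (simp add: is_lfact_def)
next
  case (Cons a w)
  then show ?case using is_lfact_append_lyndon[OF lyndon_singleton] by fastforce
qed

lemma is_lfact_lfact: "is_lfact (w::'a::linorder list) (lfact w)"
  unfolding lfact_def using is_lfact_exists is_lfact_unique by (metis theI')

lemma lfact_eqI: "is_lfact (w::'a::linorder list) fs \<Longrightarrow> lfact w = fs"
  using is_lfact_lfact is_lfact_unique by blast

lemma concat_lfact [simp]: "concat (lfact w) = (w::'a::linorder list)"
  using is_lfact_lfact[of w] by (simp add: is_lfact_def)

lemma lyndon_lfact: "f \<in> set (lfact w) \<Longrightarrow> lyndon (f::'a::linorder list)"
  using is_lfact_lfact[of w] by (simp add: is_lfact_def)

lemma sorted_lfact: "sorted_wrt (\<lambda>a b. b \<le> a) (lfact (w::'a::linorder list))"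
  using is_lfact_lfact[of w] by (simp add: is_lfact_def)

lemma lfact_Nil [simp]: "lfact ([]::'a::linorder list) = []"
  by (rule lfact_eqI) (simp add: is_lfact_def)

lemma lfact_le: "f \<in> set (lfact w) \<Longrightarrow> f \<le> (w::'a::linorder list)"
proof -
  assume "f \<in> set (lfact w)"
  then obtain g gs where gs: "lfact w = g # gs" and "f \<le> g"
    using sorted_lfact[of w] by (cases "lfact w") auto
  moreover have "g \<le> w" using concat_lfact[of w] gs le_append by (metis concat.simps(2))
  ultimately show ?thesis by auto
qed

lemma length_le_hd_lfact:
  fixes p q :: "'a::linorder list"
  assumes "lyndon p"
  shows "length p \<le> length (hd (lfact (p @ q)))"
proof -
  have "lfact (p @ q) \<noteq> []"
    using lyndon_not_Nil[OF assms] by (metis Nil_is_append_conv concat.simps(1) concat_lfact)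
  then show ?thesis using is_lfact_Cons_length_le[OF _ assms] is_lfact_lfact
    by (metis list.collapse)
qed

lemma lfact_append_lyndon:
  fixes l E :: "'a::linorder list"
  assumes "lyndon l"
  obtains j where "lfact (l @ E) = (l @ concat (take j (lfact E))) # drop j (lfact E)"
  using is_lfact_append_lyndon[OF assms is_lfact_lfact] lfact_eqI by blast

lemma lfact_Cons:
  fixes l E :: "'a::linorder list"
  assumes "lyndon l" "\<forall>g\<in>set (lfact E). g \<le> l"
  shows "lfact (l @ E) = l # lfact E"
  using assms is_lfact_lfact[of E] by (intro lfact_eqI) (simp add: is_lfact_def)

lemma lfact_snoc:
  fixes w x :: "'a::linorder list"
  assumes "lyndon x" "\<forall>f\<in>set (lfact w). x \<le> f"
  shows "lfact (w @ x) = lfact w @ [x]"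
  using assms is_lfact_lfact[of w] by (intro lfact_eqI) (simp add: is_lfact_def sorted_wrt_append)

lemma lfact_concat_take: "lfact (concat (take k (lfact w))) = take k (lfact (w::'a::linorder list))"
  using is_lfact_lfact[of w]
  by (intro lfact_eqI) (auto simp: is_lfact_def sorted_wrt_take dest: in_set_takeD)

lemma lfact_append_lyndon_even:
  fixes l E :: "'a::linorder list"
  assumes "lyndon l" "even (length l)" "\<forall>f\<in>set (lfact E). even (length f)"
  shows "\<forall>f\<in>set (lfact (l @ E)). even (length f)"
proof -
  obtain j where j: "lfact (l @ E) = (l @ concat (take j (lfact E))) # drop j (lfact E)"
    using lfact_append_lyndon[OF assms(1)] .
  have "even (length (concat fs))" if "\<forall>f\<in>set fs. even (length f)" for fs :: "'a list list"
    using that by (induction fs) auto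
  then have "even (length (concat (take j (lfact E))))"
    using assms(3) by (meson in_set_takeD)
  then show ?thesis unfolding j using assms(2,3) by (auto dest: in_set_dropD)
qed

section \<open>Standard factorization\<close>

lemma lyndon_drop_if_minimal_suffix:
  fixes w :: "'a::linorder list"
  assumes "j < length w" and min: "\<And>i. j < i \<Longrightarrow> i < length w \<Longrightarrow> drop j w \<le> drop i w"
  shows "lyndon (drop j w)"
proof -
  have "drop j w < drop k (drop j w)" if "0 < k" "k < length (drop j w)" for k
  proof -
    have "drop j w \<le> drop (j + k) w" using min that by simp
    moreover have "drop j w \<noteq> drop (j + k) w"
      using that by (auto dest: arg_cong[of _ _ length])
    ultimately show ?thesis by (simp add: add.commute)
  qed
  then show ?thesis using assms(1) by (simp add: lyndon_def)
qed

lemma std_factorization: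
  fixes l :: "'a::linorder list"
  assumes "2 \<le> length l"
  shows std_k_bounds: "0 < std_k l" "std_k l < length l"
    and lyndon_std_s: "lyndon (std_s l)"
    and std_s_le_drop: "\<And>j. 0 < j \<Longrightarrow> j < length l \<Longrightarrow> std_s l \<le> drop j l"
proof -
  let ?S = "(\<lambda>i. drop i l) ` {0<..<length l}"
  have "1 \<in> {0<..<length l}" using assms by simp
  then have "finite ?S" "?S \<noteq> {}" by auto
  then obtain v where "v \<in> ?S" and v_min: "\<forall>x\<in>?S. \<not> x < v" by (metis ex_min_if_finite)
  then obtain j0 where j0: "0 < j0" "j0 < length l" and v: "v = drop j0 l" by auto
  have min: "\<And>i. 0 < i \<Longrightarrow> i < length l \<Longrightarrow> drop j0 l \<le> drop i l"
    using v_min v by (simp add: not_less)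
  have lyn: "lyndon (drop j0 l)"
    using j0 min by (intro lyndon_drop_if_minimal_suffix) auto
  have k: "0 < std_k l \<and> std_k l < length l \<and> lyndon (drop (std_k l) l)"
    unfolding std_k_def by (rule LeastI[of _ j0]) (use j0 lyn in auto)
  have "std_k l \<le> j0"
    unfolding std_k_def by (rule Least_le) (use j0 lyn in auto)
  moreover have "\<not> std_k l < j0"
  proof
    assume "std_k l < j0"
    then have "drop (std_k l) l < drop (j0 - std_k l) (drop (std_k l) l)"
      using k j0 by (intro lyndonD) auto
    then have "drop (std_k l) l < drop j0 l" using \<open>std_k l < j0\<close> by simp
    then show False using min k by (meson leD)
  qed
  ultimately have "std_k l = j0" by simp
  then show "0 < std_k l" "std_k l < length l" "lyndon (std_s l)"
    "\<And>j. 0 < j \<Longrightarrow> j < length l \<Longrightarrow> std_s l \<le> drop j l"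
    using k min by (simp_all add: std_s_def)
qed

lemma std_r_append_std_s: "std_r l @ std_s l = l"
  by (simp add: std_r_def std_s_def)

lemma std_r_not_Nil: "2 \<le> length l \<Longrightarrow> std_r l \<noteq> []"
  using std_k_bounds[of l] by (auto simp: std_r_def)

lemma std_s_not_Nil: "2 \<le> length l \<Longrightarrow> std_s l \<noteq> []"
  using std_k_bounds[of l] by (simp add: std_s_def)

lemma std_r_less: "2 \<le> length l \<Longrightarrow> std_r l < l"
  using less_append[OF std_s_not_Nil, of l "std_r l"] by (simp add: std_r_append_std_s)

lemma less_std_s:
  assumes "lyndon l" "2 \<le> length l"
  shows "l < std_s l"
  using lyndonD[OF assms(1) std_k_bounds[OF assms(2)]] by (simp add: std_s_def)

lemma lyndon_std_r:
  fixes l :: "'a::linorder list"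
  assumes l: "lyndon l" and len: "2 \<le> length l"
  shows "lyndon (std_r l)"
proof -
  define r s where "r = std_r l" and "s = std_s l"
  have l_rs: "l = r @ s" unfolding r_def s_def by (rule std_r_append_std_s[symmetric])
  have "r < drop j r" if j: "0 < j" "j < length r" for j
  proof (rule ccontr)
    define r' where "r' = drop j r"
    assume "\<not> r < drop j r"
    moreover have "r' \<noteq> r" using j r'_def by (auto dest: arg_cong[of _ _ length])
    ultimately have "r' < r" using r'_def by simp
    have "l < drop j l" using j l_rs l by (intro lyndonD) auto
    then have rs_less: "r @ s < r' @ s" using j l_rs r'_def by simp
    then obtain z where z: "z \<noteq> []" "r = r' @ z"
      using less_imp_append_less_or_prefix[OF \<open>r' < r\<close>, of s s] by auto
    with rs_less have "z @ s < s" by simp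
    moreover have "length r' = length r - j" using r'_def by simp
    then have "0 < length r'" "length r' < length l" using j l_rs by auto
    then have "s \<le> drop (length r') l" unfolding s_def by (rule std_s_le_drop[OF len])
    ultimately show False using l_rs z by simp
  qed
  then show ?thesis using std_r_not_Nil[OF len] r_def by (simp add: lyndon_def)
qed

section \<open>The invariant of the computation of Psi\<close>

lemma sorted_desc_distinct_snoc_less:
  fixes xs :: "'b::order list"
  assumes "sorted_wrt (\<lambda>a b. b \<le> a) (xs @ [x])" "distinct (xs @ [x])" "f \<in> set xs"
  shows "x < f"
  using assms by (auto simp: sorted_wrt_append order.order_iff_strict)

lemma ext_less_simps [simp]:
  "ext_less (Some a) (Some b) \<longleftrightarrow> a < b"
  "ext_less x None \<longleftrightarrow> x \<noteq> None"
  "ext_less None y \<longleftrightarrow> False"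
  by (auto simp: ext_less_def split: option.splits)

lemma ext_less_prev_fact_iff:
  fixes xs :: "'a::linorder list list"
  assumes "sorted_wrt (\<lambda>a b. b \<le> a) xs"
  shows "ext_less (Some x) (prev_fact xs) \<longleftrightarrow> (\<forall>f\<in>set (butlast xs). x < f)"
proof (cases xs rule: rev_cases)
  case Nil
  then show ?thesis by (simp add: prev_fact_def)
next
  case (snoc ys z)
  show ?thesis
  proof (cases ys rule: rev_cases)
    case (snoc zs y)
    then have "\<forall>f\<in>set zs. y \<le> f" using assms \<open>xs = ys @ [z]\<close> by (simp add: sorted_wrt_append)
    then show ?thesis using \<open>xs = ys @ [z]\<close> snoc
      by (auto simp: prev_fact_def nth_append butlast_append intro: order.strict_trans2)
  qed (simp add: snoc prev_fact_def)
qed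

definition factors_below_suffixes :: "'a::linorder list \<Rightarrow> 'a list \<Rightarrow> bool" where
  "factors_below_suffixes e c \<longleftrightarrow> (\<forall>f\<in>set (lfact e). \<forall>j. 0 < j \<and> j < length c \<longrightarrow> f \<le> drop j c)"

lemma factors_below_suffixes_if_less:
  fixes e c :: "'a::linorder list"
  assumes "lyndon c" "e < c"
  shows "factors_below_suffixes e c"
  unfolding factors_below_suffixes_def
proof (intro ballI allI impI)
  fix f j assume "f \<in> set (lfact e)" "0 < j \<and> j < length c"
  then have "f \<le> e" "c < drop j c" using assms(1) by (auto intro: lfact_le lyndonD)
  then show "f \<le> drop j c" using \<open>e < c\<close> by simp
qed

definition psi_inv :: "'a::linorder list \<Rightarrow> 'a list \<Rightarrow> bool" where
  "psi_inv Ob Eb \<longleftrightarrow> (\<forall>f\<in>set (lfact Ob). odd (length f)) \<and> distinct (lfact Ob)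
     \<and> (\<forall>f\<in>set (lfact Eb). even (length f))
     \<and> (\<forall>f\<in>set (butlast (lfact Ob)). Eb < f)
     \<and> (Ob \<noteq> [] \<longrightarrow> factors_below_suffixes Eb (last (lfact Ob)))"

lemma psi_inv_snocD:
  fixes Ob Eb b :: "'a::linorder list"
  assumes "psi_inv Ob Eb" and os: "lfact Ob = bs @ [b]"
  shows "lyndon b" "odd (length b)" "distinct bs"
    and "\<forall>f\<in>set bs. lyndon f \<and> odd (length f) \<and> b < f \<and> Eb < f"
    and "\<forall>f\<in>set (lfact Eb). even (length f)"
    and "factors_below_suffixes Eb b"
proof -
  have "sorted_wrt (\<lambda>a b. b \<le> a) (bs @ [b])" using sorted_lfact[of Ob] os by simp
  moreover have "distinct (bs @ [b])" using assms by (simp add: psi_inv_def)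
  ultimately have "\<forall>f\<in>set bs. b < f" using sorted_desc_distinct_snoc_less by blast
  then show "lyndon b" "odd (length b)" "distinct bs"
    "\<forall>f\<in>set bs. lyndon f \<and> odd (length f) \<and> b < f \<and> Eb < f"
    "\<forall>f\<in>set (lfact Eb). even (length f)" "factors_below_suffixes Eb b"
    using assms lyndon_lfact[of _ Ob] by (auto simp: psi_inv_def)
qed

lemma psi_inv_init:
  fixes w :: "'a::linorder list"
  assumes "in_Wo w"
  shows "psi_inv w []"
proof -
  have "[] < f" if "f \<in> set (lfact w)" for f
    using lyndon_not_Nil[OF lyndon_lfact[OF that]] by (cases f) auto
  then show ?thesis
    using assms by (auto simp: psi_inv_def in_Wo_def factors_below_suffixes_def dest: in_set_butlastD)
qed

text \<open>In case (F), non-splittability is only needed to ensure that \<open>Ob\<close> has at least two Lyndon factors.\<close>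
lemma psi_step_cases:
  fixes Ob Eb :: "'a::linorder list"
  assumes "psi_step Ob Eb t Ob' Eb'"
  obtains (S) bs b where "lfact Ob = bs @ [b]" "2 \<le> length b" "\<forall>f\<in>set bs. std_s b < f"
      "t = StepS" "odd (length (std_r b))" "Ob' = concat bs @ std_r b" "Eb' = std_s b @ Eb"
    | (P) bs b where "lfact Ob = bs @ [b]" "2 \<le> length b" "\<forall>f\<in>set bs. std_s b < f"
      "t = StepP" "even (length (std_r b))" "Ob' = concat bs @ std_s b" "Eb' = std_r b @ Eb"
    | (F) cs a b where "lfact Ob = cs @ [a, b]" "t = StepF" "Ob' = concat cs" "Eb' = b @ a @ Eb"
proof -
  have "Ob \<noteq> []" using assms by (auto simp: psi_step_def)
  then obtain bs b where os: "lfact Ob = bs @ [b]"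
    by (cases "lfact Ob" rule: rev_cases) (auto dest: arg_cong[of _ _ concat])
  have splittable: "splittable (lfact Ob) \<longleftrightarrow> 2 \<le> length b \<and> (\<forall>f\<in>set bs. std_s b < f)"
    using ext_less_prev_fact_iff[OF sorted_lfact, of _ Ob] os by (simp add: splittable_def)
  show thesis
  proof (cases "splittable (lfact Ob)")
    case True
    then show thesis using assms os splittable S P by (auto simp: psi_step_def Let_def)
  next
    case False
    have "bs \<noteq> []"
    proof
      assume "bs = []"
      then have "b = Ob" using concat_lfact[of Ob] os by simp
      then show False using False splittable \<open>bs = []\<close> assms by (simp add: psi_step_def)
    qed
    then obtain cs a where "bs = cs @ [a]" by (cases bs rule: rev_cases) auto
    then show thesis using assms False os by (intro F) (auto simp: psi_step_def Let_def nth_append)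
  qed
qed

lemma psi_step_S:
  fixes Ob Eb b :: "'a::linorder list"
  defines "r \<equiv> std_r b" and "s \<equiv> std_s b"
  assumes inv: "psi_inv Ob Eb" and os: "lfact Ob = bs @ [b]" and len: "2 \<le> length b"
    and s_less: "\<forall>f\<in>set bs. s < f" and r_odd: "odd (length r)"
  shows "lfact (concat bs @ r) = bs @ [r]"
    and "lfact (s @ Eb) = s # lfact Eb"
    and "r < s"
    and "psi_inv (concat bs @ r) (s @ Eb)"
proof -
  note b = psi_inv_snocD(1,2)[OF inv os] and bs = psi_inv_snocD(3,4)[OF inv os]
    and Eb_even = psi_inv_snocD(5)[OF inv os] and below = psi_inv_snocD(6)[OF inv os]
  have b_rs: "b = r @ s" unfolding r_def s_def by (rule std_r_append_std_s[symmetric])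
  have r: "lyndon r" "r \<noteq> []" "r < b"
    unfolding r_def using lyndon_std_r[OF b(1) len] std_r_not_Nil[OF len] std_r_less[OF len] .
  have s: "lyndon s" "b < s"
    unfolding s_def using lyndon_std_s[OF len] less_std_s[OF b(1) len] .
  have r_less: "\<forall>f\<in>set bs. r < f" using bs(2) r(3) by (auto intro: order.strict_trans)
  have "0 < length r" "length r < length b" using r s b_rs by (auto dest: lyndon_not_Nil)
  have "\<forall>g\<in>set (lfact Eb). g \<le> s"
  proof
    fix g assume "g \<in> set (lfact Eb)"
    then have "g \<le> drop (length r) b"
      using below \<open>0 < length r\<close> \<open>length r < length b\<close> by (simp add: factors_below_suffixes_def)
    then show "g \<le> s" using b_rs by simp
  qed
  then show lfact_E': "lfact (s @ Eb) = s # lfact Eb" by (intro lfact_Cons s)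
  show lfact_O': "lfact (concat bs @ r) = bs @ [r]"
    using lfact_snoc[OF r(1), of "concat bs"] lfact_concat_take[of "length bs" Ob] os r_less
    by (auto simp: less_imp_le)
  show "r < s" using r s by simp
  have s_le_suffix: "s \<le> drop j r" if "0 < j" "j < length r" for j
  proof (rule lyndon_le_if_le_append[OF s(1)])
    show "drop j r \<noteq> []" using that by simp
    have "j < length b" using that b_rs by simp
    with \<open>0 < j\<close> have "s \<le> drop j b" unfolding s_def by (rule std_s_le_drop[OF len])
    then show "s \<le> drop j r @ s" using b_rs that by simp
  qed
  have "factors_below_suffixes (s @ Eb) r"
    unfolding factors_below_suffixes_def lfact_E'
    using s_le_suffix \<open>\<forall>g\<in>set (lfact Eb). g \<le> s\<close> by (auto intro: order.trans)
  moreover have "\<forall>f\<in>set bs. s @ Eb < f"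
    using bs(2) s_less lyndon_not_Nil[OF s(1)] by (auto intro!: lyndon_append_less less_imp_le)
  moreover have "even (length s)" using b(2) b_rs r_odd by simp
  ultimately show "psi_inv (concat bs @ r) (s @ Eb)"
    using lfact_O' bs r_odd r_less Eb_even
      lfact_append_lyndon_even[OF s(1)] by (auto simp: psi_inv_def)
qed

lemma psi_step_P:
  fixes Ob Eb b :: "'a::linorder list"
  defines "r \<equiv> std_r b" and "s \<equiv> std_s b"
  assumes inv: "psi_inv Ob Eb" and os: "lfact Ob = bs @ [b]" and len: "2 \<le> length b"
    and s_less: "\<forall>f\<in>set bs. s < f" and r_even: "even (length r)"
  shows "lfact (concat bs @ s) = bs @ [s]"
    and "Eb < s"
    and "r @ Eb < s"
    and "length r \<le> length (hd (lfact (r @ Eb)))"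
    and "psi_inv (concat bs @ s) (r @ Eb)"
proof -
  note b = psi_inv_snocD(1,2)[OF inv os] and bs = psi_inv_snocD(3,4)[OF inv os]
    and Eb_even = psi_inv_snocD(5)[OF inv os] and below = psi_inv_snocD(6)[OF inv os]
  have b_rs: "b = r @ s" unfolding r_def s_def by (rule std_r_append_std_s[symmetric])
  have r: "lyndon r" "r \<noteq> []" "r < b"
    unfolding r_def using lyndon_std_r[OF b(1) len] std_r_not_Nil[OF len] std_r_less[OF len] .
  have s: "lyndon s" "b < s" "s \<noteq> []"
    unfolding s_def using lyndon_std_s[OF len] less_std_s[OF b(1) len] std_s_not_Nil[OF len] .
  have s_odd: "odd (length s)" using b(2) b_rs r_even by simp
  have r_less: "\<forall>f\<in>set bs. r < f" using bs(2) r(3) by (auto intro: order.strict_trans)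
  show lfact_O': "lfact (concat bs @ s) = bs @ [s]"
    using lfact_snoc[OF s(1), of "concat bs"] lfact_concat_take[of "length bs" Ob] os s_less
    by (auto simp: less_imp_le)
  have "\<forall>g\<in>set (lfact Eb). \<forall>j<length s. g < drop j s"
  proof (intro ballI allI impI)
    fix g j assume g: "g \<in> set (lfact Eb)" and "j < length s"
    have "0 < length r" "length r < length b" using r s b_rs by auto
    then have "g \<le> drop (length r) b" using below g by (simp add: factors_below_suffixes_def)
    moreover have "g \<noteq> s" using g Eb_even s_odd by auto
    ultimately have "g < s" using b_rs by simp
    also have "s \<le> drop j s" using lyndon_le_drop[OF s(1) \<open>j < length s\<close>] .
    finally show "g < drop j s" .
  qed
  then show Eb_less_s: "Eb < s"
    using concat_less_if_less_suffixes[OF s(3)] concat_lfact[of Eb] by metis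
  show rEb_less: "r @ Eb < s"
    using lyndon_append_less[OF s(1) r(2)] r(3) s(2) Eb_less_s by simp
  show "length r \<le> length (hd (lfact (r @ Eb)))" by (rule length_le_hd_lfact[OF r(1)])
  have "\<forall>f\<in>set bs. r @ Eb < f"
    using bs(2) r_less r(2) by (auto intro!: lyndon_append_less less_imp_le)
  then show "psi_inv (concat bs @ s) (r @ Eb)"
    using lfact_O' bs s_odd s_less Eb_even r_even
      lfact_append_lyndon_even[OF r(1)] factors_below_suffixes_if_less[OF s(1) rEb_less]
    by (auto simp: psi_inv_def)
qed

lemma psi_step_F:
  fixes Ob Eb a b :: "'a::linorder list"
  assumes inv: "psi_inv Ob Eb" and os: "lfact Ob = cs @ [a, b]"
  shows "lfact (concat cs) = cs"
    and "length (b @ a) \<le> length (hd (lfact (b @ a @ Eb)))"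
    and "cs \<noteq> [] \<Longrightarrow> b @ a @ Eb < last cs"
    and "psi_inv (concat cs) (b @ a @ Eb)"
proof -
  have lyn: "\<forall>f\<in>set (cs @ [a, b]). lyndon f" and odd: "\<forall>f\<in>set (cs @ [a, b]). odd (length f)"
    and dist: "distinct (cs @ [a, b])" and Eb_less_a: "Eb < a"
    and Eb_even: "\<forall>f\<in>set (lfact Eb). even (length f)"
    using inv os lyndon_lfact[of _ Ob] by (auto simp: psi_inv_def butlast_append)
  have sorted: "sorted_wrt (\<lambda>a b. b \<le> a) (cs @ [a, b])" using sorted_lfact[of Ob] os by simp
  have "b < a" using sorted_desc_distinct_snoc_less[of "cs @ [a]" b] sorted dist by simp
  have a_less: "\<forall>c\<in>set cs. a < c"
    using sorted_desc_distinct_snoc_less[of cs a] sorted dist by (simp add: sorted_wrt_append)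
  have ba: "lyndon (b @ a)" using lyn \<open>b < a\<close> by (intro lyndon_append) auto
  show "lfact (concat cs) = cs" using lfact_concat_take[of "length cs" Ob] os by simp
  show "length (b @ a) \<le> length (hd (lfact (b @ a @ Eb)))"
    using length_le_hd_lfact[OF ba] by simp
  have "a \<noteq> []" "b \<noteq> []" using lyn by (auto dest: lyndon_not_Nil)
  have less_c: "b @ a @ Eb < c" if "c \<in> set cs" for c
  proof -
    have c: "lyndon c" "a < c" using that lyn a_less by auto
    have "a @ Eb < c"
      using lyndon_append_less[OF c(1) \<open>a \<noteq> []\<close> c(2)] Eb_less_a c(2) by simp
    moreover have "b < c" using \<open>b < a\<close> c(2) by simp
    ultimately show ?thesis
      using lyndon_append_less[OF c(1) \<open>b \<noteq> []\<close>] by simp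
  qed
  then show last_less: "cs \<noteq> [] \<Longrightarrow> b @ a @ Eb < last cs" by simp
  have "odd (length a)" "odd (length b)" using odd by auto
  then have "even (length (b @ a))" by simp
  from lfact_append_lyndon_even[OF ba this Eb_even]
  have "\<forall>f\<in>set (lfact (b @ a @ Eb)). even (length f)" by simp
  moreover have "factors_below_suffixes (b @ a @ Eb) (last cs)" if "concat cs \<noteq> []"
  proof -
    have "cs \<noteq> []" using that by auto
    then show ?thesis using lyn last_less by (intro factors_below_suffixes_if_less) auto
  qed
  moreover have "\<forall>f\<in>set (butlast cs). b @ a @ Eb < f" using less_c by (auto dest: in_set_butlastD)
  ultimately show "psi_inv (concat cs) (b @ a @ Eb)"
    using \<open>lfact (concat cs) = cs\<close> odd dist by (simp add: psi_inv_def)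
qed

lemma psi_step_inv:
  fixes Ob Eb :: "'a::linorder list"
  assumes inv: "psi_inv Ob Eb" and "psi_step Ob Eb t Ob' Eb'"
  shows "psi_inv Ob' Eb'"
  using assms(2)
proof (cases rule: psi_step_cases)
  case (S bs b)
  then show ?thesis using psi_step_S(4)[OF inv S(1-3,5)] by simp
next
  case (P bs b)
  then show ?thesis using psi_step_P(5)[OF inv P(1-3,5)] by simp
next
  case (F cs a b)
  then show ?thesis using psi_step_F(4)[OF inv F(1)] by simp
qed

lemma psi_reach_inv:
  fixes w :: "'a::linorder list"
  assumes "in_Wo w" "psi_reach w Ob Eb"
  shows "psi_inv Ob Eb"
  using assms(2)
proof induction
  case init
  show ?case using assms(1) by (rule psi_inv_init)
next
  case (step Ob Eb t Ob' Eb')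
  then show ?case by (blast intro: psi_step_inv)
qed

theorem lemma4p21:
  fixes w Ob Eb Ob' Eb' :: "'a::{linorder, finite} list" and t :: steptype
  assumes "in_Wo w"
    and "psi_reach w Ob Eb"
    and "psi_step Ob Eb t Ob' Eb'"
  defines "os \<equiv> lfact Ob"
    and "os' \<equiv> lfact Ob'"
  defines "m \<equiv> length os"
    and "h \<equiv> length os'"
  defines "r \<equiv> std_r (last os)"
    and "s \<equiv> std_s (last os)"
  defines "oh' \<equiv> (if h \<ge> 1 then Some (os' ! (h - 1)) else None)"
    and "ohm1' \<equiv> (if h \<ge> 2 then Some (os' ! (h - 2)) else None)"
  defines "l \<equiv> (if t = StepS then s else if t = StepP then r else last os @ os ! (m - 2))"
  shows
    \<comment> \<open>(i)\<close>
    "(\<forall>f\<in>set os'. odd (length f)) \<and> distinct os'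
     \<and> (t = StepS \<longrightarrow> os' = butlast os @ [r])
     \<and> (t = StepP \<longrightarrow> os' = butlast os @ [s])
     \<and> (t = StepF \<longrightarrow> os' = take (m - 2) os)
     \<comment> \<open>(ii)\<close>
     \<and> ext_less (Some Eb') ohm1'
     \<comment> \<open>(iii)\<close>
     \<and> (t = StepF \<longrightarrow> ext_less (Some Eb') oh')
     \<comment> \<open>(iv)\<close>
     \<and> (t = StepP \<longrightarrow> ext_less (Some Eb') oh' \<and> ext_less (Some Eb) oh')
     \<comment> \<open>(v)\<close>
     \<and> (t = StepS \<longrightarrow> hd (lfact Eb') = s \<and> ext_less oh' (Some s) \<and> ord_class.lexordp_eq s Eb')
     \<comment> \<open>(vi)\<close>
     \<and> (\<forall>f\<in>set (lfact Eb'). even (length f))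
     \<and> Eb' = l @ Eb \<and> length l \<le> length (hd (lfact Eb'))"
proof -
  have inv: "psi_inv Ob Eb" using assms(1,2) by (rule psi_reach_inv)
  have ohm1': "ohm1' = prev_fact os'" by (simp add: ohm1'_def h_def prev_fact_def)
  have oh': "oh' = (if os' = [] then None else Some (last os'))"
    by (simp add: oh'_def h_def last_conv_nth Suc_le_eq)
  have "psi_inv Ob' Eb'" using inv assms(3) by (rule psi_step_inv)
  then have common: "(\<forall>f\<in>set os'. odd (length f)) \<and> distinct os' \<and> ext_less (Some Eb') ohm1'
      \<and> (\<forall>f\<in>set (lfact Eb'). even (length f))"
    unfolding ohm1' os'_def psi_inv_def by (simp add: ext_less_prev_fact_iff[OF sorted_lfact])
  from assms(3) show ?thesis
  proof (cases rule: psi_step_cases)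
    case (S bs b)
    note step = psi_step_S[OF inv S(1-3,5)]
    show ?thesis using common step S le_append[of "std_s b" Eb]
      by (simp add: os'_def oh' os_def r_def s_def l_def)
  next
    case (P bs b)
    note step = psi_step_P[OF inv P(1-3,5)]
    show ?thesis using common step P
      by (simp add: os'_def oh' os_def r_def s_def l_def)
  next
    case (F cs a b)
    note step = psi_step_F[OF inv F(1)]
    show ?thesis using common step F
      by (simp add: os'_def oh' os_def m_def l_def nth_append)
  qed
qed

end
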